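(* Let $N\ge1$, $\lambda_1,\dots,\lambda_N$ distinct, $\mu_1,\dots,\mu_N$ nonzero constants, $A=\mathrm{diag}(\lambda_j)$, $B=\mathrm{diag}(\mu_j)$. Suppose $P_i,Q_i$ ($i=1,2,3$) satisfy the nonlinearized spatial system (defined below). Then for all $m\ge0$: \[\tilde a_{m+1}=\sum_{i=0}^m I_i(\langle A^{m-i}P_1,BQ_1\rangle-\langle A^{m-i}P_3,BQ_3\rangle)-I_{m+1},\] \[\tilde b_{m+1}=\sqrt2\sum_{i=0}^m I_i(\langle A^{m-i}P_1,BQ_2\rangle+\langle A^{m-i}P_2,BQ_3\rangle),\] \[\tilde c_{m+1}=\sqrt2\sum_{i=0}^m I_i(\langle A^{m-i}P_2,BQ_1\rangle+\langle A^{m-i}P_3,BQ_2\rangle),\] where $I_0=1$ and \[I_m=\sum_{n=1}^m d_n\sum_{\substack{i_1+\cdots+i_n=m\\ i_1,\dots,i_n\ge1}}F_{i_1}\cdots F_{i_n},\quad m\ge1,\] with constants $d_n$ determined by $d_1=-\frac18$, $d_2=\frac{3}{128}$ and \[d_n=-\frac12\sum_{i=1}^{n-1}d_id_{n-i}-\frac14 d_{n-1}-\frac18\sum_{i=1}^{n-2}d_id_{n-i-1},\quad n\ge3.\]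
   Context: Potential $u=(q,r)^T$; $U(u,\lambda)=\begin{pmatrix}-2\lambda&\sqrt2 q&0\\ \sqrt2 r&0&\sqrt2 q\\ 0&\sqrt2 r&2\lambda\end{pmatrix}$. Differential polynomials $a_i,b_i,c_i$ in $q,r$ and their $x$-derivatives are defined by $a_0=-1$, $b_0=c_0=0$ and, for $i\ge0$, $a_{i+1}=\frac12\partial^{-1}(q c_{i,x}+r b_{i,x})$, $b_{i+1}=-\frac12 b_{i,x}-q a_i$, $c_{i+1}=\frac12 c_{i,x}-r a_i$ ($\partial=d/dx$), with the constants of integration fixed by requiring $a_i|_{u=0}=b_i|_{u=0}=c_i|_{u=0}=0$ for $i\ge1$ (e.g. $a_1=0$, $b_1=q$, $c_1=r$, $a_2=\frac12qr$, $b_2=-\frac12q_x$, $c_2=\frac12r_x$). Phase space $\mathbb{R}^{6N}$ with coordinates $\phi_{ij},\psi_{ij}$ ($i=1,2,3$, $j=1,\dots,N$), $P_i=(\phi_{i1},\dots,\phi_{iN})^T$, $Q_i=(\psi_{i1},\dots,\psi_{iN})^T$, $\langle\cdot,\cdot\rangle$ the standard inner product on $\mathbb{R}^N$. Set $\tilde q=\sqrt2(\langle P_1,BQ_2\rangle+\langle P_2,BQ_3\rangle)$, $\tilde r=\sqrt2(\langle P_2,BQ_1\rangle+\langle P_3,BQ_2\rangle)$, $\tilde u=(\tilde q,\tilde r)^T$. The nonlinearized spatial system is $(\phi_{1j},\phi_{2j},\phi_{3j})^T_x=U(\tilde u,\lambda_j)(\phi_{1j},\phi_{2j},\phi_{3j})^T$,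 $(\psi_{1j},\psi_{2j},\psi_{3j})^T_x=-U(\tilde u,\lambda_j)^T(\psi_{1j},\psi_{2j},\psi_{3j})^T$, $j=1,\dots,N$. For a differential polynomial $Z$ in $u$, $\tilde Z$ denotes the result of substituting $u=\tilde u$ (with $x$-derivatives taken along the solution, equivalently eliminated using the nonlinearized spatial system). $F_1=-8(\langle P_1,BQ_1\rangle-\langle P_3,BQ_3\rangle)$ and for $m\ge2$: $F_m=4\sum_{i=1}^{m-1}\big[(\langle A^{i-1}P_1,BQ_1\rangle-\langle A^{i-1}P_3,BQ_3\rangle)(\langle A^{m-i-1}P_1,BQ_1\rangle-\langle A^{m-i-1}P_3,BQ_3\rangle)+2(\langle A^{i-1}P_1,BQ_2\rangle+\langle A^{i-1}P_2,BQ_3\rangle)(\langle A^{m-i-1}P_2,BQ_1\rangle+\langle A^{m-i-1}P_3,BQ_2\rangle)\big]-8(\langle A^{m-1}P_1,BQ_1\rangle-\langle A^{m-1}P_3,BQ_3\rangle)$. *)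

theory Defs
  imports "HOL-Analysis.Analysis"
begin

text \<open>A jet is a pair of sequences (q_0, q_1, q_2, ...) and (r_0, r_1, ...), where q_k stands
for the k-th x-derivative of q.\<close>

type_synonym jetfun = "(nat \<Rightarrow> real) \<Rightarrow> (nat \<Rightarrow> real) \<Rightarrow> real"

inductive diffpoly :: "jetfun \<Rightarrow> bool" where
  dp_const: "diffpoly (\<lambda>Q R. c)"
| dp_q: "diffpoly (\<lambda>Q R. Q k)"
| dp_r: "diffpoly (\<lambda>Q R. R k)"
| dp_add: "diffpoly f \<Longrightarrow> diffpoly g \<Longrightarrow> diffpoly (\<lambda>Q R. f Q R + g Q R)"
| dp_mult: "diffpoly f \<Longrightarrow> diffpoly g \<Longrightarrow> diffpoly (\<lambda>Q R. f Q R * g Q R)"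

definition jet :: "(real \<Rightarrow> real) \<Rightarrow> real \<Rightarrow> nat \<Rightarrow> real" where
  "jet f x k = (deriv ^^ k) f x"

definition smooth :: "(real \<Rightarrow> real) \<Rightarrow> bool" where
  "smooth f \<longleftrightarrow> (\<forall>k x. (deriv ^^ k) f differentiable (at x))"

definition along :: "jetfun \<Rightarrow> (real \<Rightarrow> real) \<Rightarrow> (real \<Rightarrow> real) \<Rightarrow> real \<Rightarrow> real" where
  "along Z q r x = Z (jet q x) (jet r x)"

definition Dx :: "jetfun \<Rightarrow> jetfun" where
  "Dx Z = (THE W. diffpoly W \<and>
     (\<forall>q r x. smooth q \<longrightarrow> smooth r \<longrightarrow>
        (along Z q r has_real_derivative along W q r x) (at x)))"

definition Dinv :: "jetfun \<Rightarrow> jetfun" where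
  "Dinv Z = (THE W. diffpoly W \<and> W (\<lambda>_. 0) (\<lambda>_. 0) = 0 \<and>
     (\<forall>q r x. smooth q \<longrightarrow> smooth r \<longrightarrow>
        (along W q r has_real_derivative along Z q r x) (at x)))"

fun abc :: "nat \<Rightarrow> jetfun \<times> jetfun \<times> jetfun" where
  "abc 0 = ((\<lambda>Q R. -1), (\<lambda>Q R. 0), (\<lambda>Q R. 0))"
| "abc (Suc i) = (case abc i of (a, b, c) \<Rightarrow>
     ((\<lambda>Q R. (1/2) * Dinv (\<lambda>Q R. Q 0 * Dx c Q R + R 0 * Dx b Q R) Q R),
      (\<lambda>Q R. -(1/2) * Dx b Q R - Q 0 * a Q R),
      (\<lambda>Q R. (1/2) * Dx c Q R - R 0 * a Q R)))"

definition a_dp :: "nat \<Rightarrow> jetfun" where "a_dp i = fst (abc i)"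
definition b_dp :: "nat \<Rightarrow> jetfun" where "b_dp i = fst (snd (abc i))"
definition c_dp :: "nat \<Rightarrow> jetfun" where "c_dp i = snd (snd (abc i))"

text \<open>P a j = \<phi>_{aj}, Q b j = \<psi>_{bj}, lam j = \<lambda>_j, mu j = \<mu>_j.
 ip lam mu N P Q k a b = \<langle>A^k P_a, B Q_b\<rangle> with A = diag(\<lambda>_j), B = diag(\<mu>_j).\<close>
definition ip :: "(nat \<Rightarrow> real) \<Rightarrow> (nat \<Rightarrow> real) \<Rightarrow> nat \<Rightarrow> (nat \<Rightarrow> nat \<Rightarrow> real) \<Rightarrow>
    (nat \<Rightarrow> nat \<Rightarrow> real) \<Rightarrow> nat \<Rightarrow> nat \<Rightarrow> nat \<Rightarrow> real" where
  "ip lam mu N P Q k a b = (\<Sum>j=1..N. (lam j ^ k * P a j) * (mu j * Q b j))"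

definition Fm :: "(nat \<Rightarrow> real) \<Rightarrow> (nat \<Rightarrow> real) \<Rightarrow> nat \<Rightarrow> (nat \<Rightarrow> nat \<Rightarrow> real) \<Rightarrow>
    (nat \<Rightarrow> nat \<Rightarrow> real) \<Rightarrow> nat \<Rightarrow> real" where
  "Fm lam mu N P Q m =
    (let g = ip lam mu N P Q in
     if m = 1 then -8 * (g 0 1 1 - g 0 3 3)
     else 4 * (\<Sum>i=1..m-1.
              (g (i-1) 1 1 - g (i-1) 3 3) * (g (m-i-1) 1 1 - g (m-i-1) 3 3)
            + 2 * (g (i-1) 1 2 + g (i-1) 2 3) * (g (m-i-1) 2 1 + g (m-i-1) 3 2))
          - 8 * (g (m-1) 1 1 - g (m-1) 3 3))"

fun dn :: "nat \<Rightarrow> real" where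
  "dn 0 = 0"
| "dn (Suc 0) = -1/8"
| "dn (Suc (Suc 0)) = 3/128"
| "dn (Suc (Suc (Suc k))) =
     (let n = Suc (Suc (Suc k)) in
      -(1/2) * (\<Sum>i\<in>{1..n-1}. dn i * dn (n-i)) - (1/4) * dn (n-1)
      - (1/8) * (\<Sum>i\<in>{1..n-2}. dn i * dn (n-i-1)))"

definition Im :: "(nat \<Rightarrow> real) \<Rightarrow> (nat \<Rightarrow> real) \<Rightarrow> nat \<Rightarrow> (nat \<Rightarrow> nat \<Rightarrow> real) \<Rightarrow>
    (nat \<Rightarrow> nat \<Rightarrow> real) \<Rightarrow> nat \<Rightarrow> real" where
  "Im lam mu N P Q m =
    (if m = 0 then 1
     else (\<Sum>n=1..m. dn n *
        (\<Sum>is\<in>{is. length is = n \<and> (\<forall>i\<in>set is. 1 \<le> i) \<and> sum_list is = m}.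
            prod_list (map (Fm lam mu N P Q) is))))"

end

(* Collect the brackets in generating series in X (X standing for 1/lambda):
   G = sum_k (<A^k P_1, B Q_1> - <A^k P_3, B Q_3>) X^k, and H, K likewise.  Along a solution
   of the nonlinearized system, G, H, K obey linear x-ODEs which make the series
   F = 4 X^2 (G^2 + 2 H K) - 8 X G of the F_m independent of x, hence also
   I = d(F), where d(t) = sum_n d_n t^n = (1 + t/4)^(-1/2).  The series A = -I + X I G,
   B = sqrt 2 X I H and C = sqrt 2 X I K then satisfy B = X (-B_x/2 - q A) and
   C = X (C_x/2 - r A), which is the recursion for b_m and c_m, and A^2 + B C = 1, which is the
   recursion a_(m+1) = 1/2 sum_(i=1..m) (a_i a_(m+1-i) + b_i c_(m+1-i)) obtained by evaluating the
   antiderivative in the definition of a_(m+1).  Induction on m gives a_m = A_m, b_m = B_m and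
   c_m = C_m.  The total derivative and its inverse, defined by THE, are pinned down by realising
   jets by polynomials. *)

theory Submission
  imports Defs "HOL-Computational_Algebra.Computational_Algebra" "HOL-Computational_Algebra.Field_as_Ring"
begin

section \<open>The total derivative and its inverse on differential polynomials\<close>

definition smooth_at :: "(real \<Rightarrow> real) \<Rightarrow> real \<Rightarrow> bool" where
  "smooth_at f x \<longleftrightarrow> (\<forall>k. (deriv ^^ k) f differentiable (at x))"

lemma smooth_imp_smooth_at: "smooth f \<Longrightarrow> smooth_at f x"
  by (simp add: smooth_def smooth_at_def)

lemma along_eq: "along Z q r = (\<lambda>x. Z (jet q x) (jet r x))"
  by (simp add: along_def fun_eq_iff)

lemma along_jet_0: "along (\<lambda>Q R. Q 0) q r x = q x" "along (\<lambda>Q R. R 0) q r x = r x"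
  by (simp_all add: along_def jet_def)

lemma diffpoly_diff: "diffpoly f \<Longrightarrow> diffpoly g \<Longrightarrow> diffpoly (\<lambda>Q R. f Q R - g Q R)"
  using dp_add[of f "\<lambda>Q R. -1 * g Q R"] dp_mult[OF dp_const[of "-1"]] by simp

lemma diffpoly_cmult: "diffpoly f \<Longrightarrow> diffpoly (\<lambda>Q R. c * f Q R)"
  by (rule dp_mult[OF dp_const])

lemma diffpoly_sum: "(\<And>i. i \<in> S \<Longrightarrow> diffpoly (f i)) \<Longrightarrow> diffpoly (\<lambda>Q R. \<Sum>i\<in>S. f i Q R)"
proof (induction S rule: infinite_finite_induct)
  case (insert a S)
  then show ?case using dp_add[of "f a" "\<lambda>Q R. \<Sum>i\<in>S. f i Q R"] by simp
qed (use dp_const[of 0] in simp_all)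

definition depends_on_jet :: "nat \<Rightarrow> jetfun \<Rightarrow> bool" where
  "depends_on_jet K Z \<longleftrightarrow>
     (\<forall>Q R Q' R'. (\<forall>k<K. Q k = Q' k) \<longrightarrow> (\<forall>k<K. R k = R' k) \<longrightarrow> Z Q R = Z Q' R')"

lemma depends_on_jetI:
  "(\<And>Q R Q' R'. (\<And>k. k < K \<Longrightarrow> Q k = Q' k) \<Longrightarrow> (\<And>k. k < K \<Longrightarrow> R k = R' k) \<Longrightarrow> Z Q R = Z Q' R')
    \<Longrightarrow> depends_on_jet K Z"
  unfolding depends_on_jet_def by blast

lemma depends_on_jetD:
  "depends_on_jet K Z \<Longrightarrow> (\<And>k. k < K \<Longrightarrow> Q k = Q' k) \<Longrightarrow> (\<And>k. k < K \<Longrightarrow> R k = R' k)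
    \<Longrightarrow> Z Q R = Z Q' R'"
  unfolding depends_on_jet_def by blast

lemma depends_on_jet_combine:
  assumes "depends_on_jet K1 f" "depends_on_jet K2 g"
  shows "depends_on_jet (max K1 K2) (\<lambda>Q R. F (f Q R) (g Q R))"
proof (rule depends_on_jetI)
  fix Q R Q' R' :: "nat \<Rightarrow> real"
  assume "\<And>k. k < max K1 K2 \<Longrightarrow> Q k = Q' k" "\<And>k. k < max K1 K2 \<Longrightarrow> R k = R' k"
  then have "f Q R = f Q' R'" "g Q R = g Q' R'"
    by (auto intro: depends_on_jetD[OF assms(1)] depends_on_jetD[OF assms(2)])
  then show "F (f Q R) (g Q R) = F (f Q' R') (g Q' R')" by simp
qed

lemma diffpoly_depends_on_jet: "diffpoly Z \<Longrightarrow> \<exists>K. depends_on_jet K Z"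
proof (induction rule: diffpoly.induct)
  case (dp_const c)
  show ?case by (auto intro: depends_on_jetI)
next
  case (dp_q k)
  show ?case by (rule exI[of _ "Suc k"], rule depends_on_jetI) auto
next
  case (dp_r k)
  show ?case by (rule exI[of _ "Suc k"], rule depends_on_jetI) auto
next
  case (dp_add f g)
  then show ?case using depends_on_jet_combine[where F = "(+)"] by blast
next
  case (dp_mult f g)
  then show ?case using depends_on_jet_combine[where F = "(*)"] by blast
qed

lemma higher_deriv_poly: "(deriv ^^ k) (poly p) = poly ((pderiv ^^ k) p)"
  by (induction k) (auto intro!: DERIV_imp_deriv poly_DERIV)

lemma smooth_poly: "smooth (poly p)"
  unfolding smooth_def higher_deriv_poly using poly_DERIV real_differentiable_def by blast

lemma jet_poly: "jet (poly p) x k = poly ((pderiv ^^ k) p) x"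
  by (simp add: jet_def higher_deriv_poly)

lemma poly_higher_pderiv_0: "poly ((pderiv ^^ k) p) 0 = fact k * coeff p k"
  by (simp add: poly_0_coeff_0 coeff_higher_pderiv pochhammer_fact)

lemma poly_with_jet_at_0: "\<exists>p. \<forall>k<K. jet (poly p) 0 k = (Q k :: real)"
proof -
  define p where "p = (\<Sum>i<K. monom (Q i / fact i) i)"
  have "coeff p k = (if k < K then Q k / fact k else 0)" for k
    unfolding p_def coeff_sum coeff_monom by (auto simp: if_distrib)
  then show ?thesis by (intro exI[of _ p]) (auto simp: jet_poly poly_higher_pderiv_0)
qed

lemma pderiv_dvd_power:
  fixes P p :: "'a::{comm_ring_1,semiring_no_zero_divisors} poly"
  assumes "p ^ Suc n dvd P" shows "p ^ n dvd pderiv P"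
proof -
  obtain S where S: "P = p ^ Suc n * S" using assms by (auto simp: dvd_def)
  have "pderiv P = p ^ n * (smult (of_nat (Suc n)) (pderiv p * S) + p * pderiv S)"
    unfolding S pderiv_mult pderiv_power_Suc by (simp add: algebra_simps)
  then show ?thesis by simp
qed

lemma higher_pderiv_at_multiple_root:
  fixes P :: "real poly"
  assumes "[:-a, 1:] ^ n dvd P" "k < n"
  shows "poly ((pderiv ^^ k) P) a = 0"
proof -
  have "[:-a, 1:] ^ (n - k) dvd (pderiv ^^ k) P"
    using \<open>k < n\<close>
  proof (induction k)
    case 0 then show ?case using assms(1) by simp
  next
    case (Suc k)
    then have "[:-a, 1:] ^ Suc (n - Suc k) dvd (pderiv ^^ k) P" by (simp add: Suc_diff_Suc)
    then show ?case by (simp add: pderiv_dvd_power)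
  qed
  then have "[:-a, 1:] dvd (pderiv ^^ k) P"
    using \<open>k < n\<close> by (meson dvd_power dvd_trans zero_less_diff)
  then show ?thesis by (simp add: poly_eq_0_iff_dvd)
qed

lemma cutoff_poly_exists: "\<exists>h :: real poly. [:0, 1:] ^ K dvd 1 - h \<and> [:-1, 1:] ^ K dvd h"
proof -
  have "coprime [:0, 1::real:] [:-1, 1:]"
  proof (rule coprimeI)
    fix c assume "c dvd [:0, 1::real:]" "c dvd [:-1, 1:]"
    then have "c dvd [:0, 1::real:] - [:-1, 1:]" by (rule dvd_diff)
    then show "is_unit c" by (simp add: one_pCons[symmetric])
  qed
  then have "gcd ([:0, 1::real:] ^ K) ([:-1, 1:] ^ K) = 1" by simp
  then obtain A B where "A * [:0, 1:] ^ K + B * [:-1, 1:] ^ K = (1 :: real poly)"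
    by (metis bezout_coefficients_fst_snd)
  then have "1 - B * [:-1, 1:] ^ K = A * [:0, 1:] ^ K" by (metis add_diff_cancel_right')
  then show ?thesis by (intro exI[of _ "B * [:-1, 1:] ^ K"]) auto
qed

lemma diffpoly_eq_0_if_along_eq_0:
  assumes "diffpoly W" and "\<And>q r x. smooth q \<Longrightarrow> smooth r \<Longrightarrow> along W q r x = 0"
  shows "W Q R = 0"
proof -
  obtain K where K: "depends_on_jet K W"
    using diffpoly_depends_on_jet[OF assms(1)] by blast
  obtain p where p: "\<forall>k<K. jet (poly p) 0 k = Q k" using poly_with_jet_at_0 by blast
  obtain p' where p': "\<forall>k<K. jet (poly p') 0 k = R k" using poly_with_jet_at_0 by blast
  have "W Q R = along W (poly p) (poly p') 0"
    unfolding along_def by (rule depends_on_jetD[OF K]) (use p p' in auto)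
  also have "\<dots> = 0" using assms(2) smooth_poly by blast
  finally show ?thesis .
qed

text \<open>Multiplying by a polynomial h with 1 - h divisible by X^K and h divisible by (X - 1)^K
  realises any jet of order K at 0 together with the zero jet at 1.\<close>
lemma diffpoly_eq_0_if_along_const:
  assumes "diffpoly W" and "W (\<lambda>_. 0) (\<lambda>_. 0) = 0"
    and "\<And>q r x. smooth q \<Longrightarrow> smooth r \<Longrightarrow> (along W q r has_real_derivative 0) (at x)"
  shows "W Q R = 0"
proof -
  obtain K where K: "depends_on_jet K W"
    using diffpoly_depends_on_jet[OF assms(1)] by blast
  obtain p where p: "\<forall>k<K. jet (poly p) 0 k = Q k" using poly_with_jet_at_0 by blast
  obtain p' where p': "\<forall>k<K. jet (poly p') 0 k = R k" using poly_with_jet_at_0 by blast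
  obtain h :: "real poly" where h0: "[:0, 1:] ^ K dvd 1 - h" and h1: "[:-1, 1:] ^ K dvd h"
    using cutoff_poly_exists by blast
  have jet_0: "jet (poly (V * h)) 0 k = jet (poly V) 0 k" if "k < K" for k V
  proof -
    have "poly ((pderiv ^^ k) (V * (1 - h))) 0 = 0"
      by (rule higher_pderiv_at_multiple_root[OF _ that]) (use h0 in simp)
    moreover have "V = V * h + V * (1 - h)" by (simp add: algebra_simps)
    then have "(pderiv ^^ k) V = (pderiv ^^ k) (V * h) + (pderiv ^^ k) (V * (1 - h))"
      by (metis higher_pderiv_add)
    ultimately show ?thesis by (simp add: jet_poly)
  qed
  have jet_1: "jet (poly (V * h)) 1 k = 0" if "k < K" for k V
    unfolding jet_poly by (rule higher_pderiv_at_multiple_root[OF _ that]) (use h1 in auto)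
  define q where "q = poly (p * h)"
  define r where "r = poly (p' * h)"
  have "W Q R = along W q r 0"
    unfolding along_def q_def r_def by (rule depends_on_jetD[OF K]) (use p p' jet_0 in auto)
  also have "\<dots> = along W q r 1"
    using DERIV_isconst_all assms(3) smooth_poly unfolding q_def r_def by blast
  also have "\<dots> = W (\<lambda>_. 0) (\<lambda>_. 0)"
    unfolding along_def q_def r_def by (rule depends_on_jetD[OF K]) (use jet_1 in auto)
  finally show ?thesis using assms(2) by simp
qed

lemma along_coordinate: "along (\<lambda>Q R. Q k) q r = (deriv ^^ k) q" "along (\<lambda>Q R. R k) q r = (deriv ^^ k) r"
  by (simp_all add: along_def jet_def fun_eq_iff)

lemma smooth_at_higher_deriv:
  "smooth_at f x \<Longrightarrow> ((deriv ^^ k) f has_real_derivative deriv ((deriv ^^ k) f) x) (at x)"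
  by (simp add: smooth_at_def DERIV_deriv_iff_real_differentiable)

lemma diffpoly_along_has_derivative:
  assumes "diffpoly Z"
  shows "\<exists>W. diffpoly W \<and> W (\<lambda>_. 0) (\<lambda>_. 0) = 0 \<and>
    (\<forall>q r x. smooth_at q x \<longrightarrow> smooth_at r x \<longrightarrow>
       (along Z q r has_real_derivative along W q r x) (at x))"
  using assms
proof (induction rule: diffpoly.induct)
  case (dp_const c)
  show ?case
    by (intro exI[of _ "\<lambda>Q R. 0"]) (auto intro: diffpoly.intros simp: along_def)
next
  case (dp_q k)
  show ?case
    by (intro exI[of _ "\<lambda>Q R. Q (Suc k)"])
       (auto intro: diffpoly.intros smooth_at_higher_deriv simp: along_coordinate)
next
  case (dp_r k)
  show ?case
    by (intro exI[of _ "\<lambda>Q R. R (Suc k)"])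
       (auto intro: diffpoly.intros smooth_at_higher_deriv simp: along_coordinate)
next
  case (dp_add f g)
  then obtain Wf Wg where "diffpoly Wf" "Wf (\<lambda>_. 0) (\<lambda>_. 0) = 0"
     "\<forall>q r x. smooth_at q x \<longrightarrow> smooth_at r x \<longrightarrow> (along f q r has_real_derivative along Wf q r x) (at x)"
    and "diffpoly Wg" "Wg (\<lambda>_. 0) (\<lambda>_. 0) = 0"
     "\<forall>q r x. smooth_at q x \<longrightarrow> smooth_at r x \<longrightarrow> (along g q r has_real_derivative along Wg q r x) (at x)"
    by blast
  then show ?case
    by (intro exI[of _ "\<lambda>Q R. Wf Q R + Wg Q R"])
       (auto intro: diffpoly.intros DERIV_add simp: along_eq)
next
  case (dp_mult f g)
  then obtain Wf Wg where "diffpoly Wf" "Wf (\<lambda>_. 0) (\<lambda>_. 0) = 0"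
     "\<forall>q r x. smooth_at q x \<longrightarrow> smooth_at r x \<longrightarrow> (along f q r has_real_derivative along Wf q r x) (at x)"
    and "diffpoly Wg" "Wg (\<lambda>_. 0) (\<lambda>_. 0) = 0"
     "\<forall>q r x. smooth_at q x \<longrightarrow> smooth_at r x \<longrightarrow> (along g q r has_real_derivative along Wg q r x) (at x)"
    by blast
  with dp_mult.hyps show ?case
    by (intro exI[of _ "\<lambda>Q R. Wf Q R * g Q R + Wg Q R * f Q R"])
       (auto intro: diffpoly.intros DERIV_mult simp: along_eq)
qed

lemma Dx_spec:
  assumes "diffpoly Z"
  shows "diffpoly (Dx Z) \<and> Dx Z (\<lambda>_. 0) (\<lambda>_. 0) = 0 \<and>
    (\<forall>q r x. smooth_at q x \<longrightarrow> smooth_at r x \<longrightarrow>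
       (along Z q r has_real_derivative along (Dx Z) q r x) (at x))"
proof -
  obtain W where W: "diffpoly W" "W (\<lambda>_. 0) (\<lambda>_. 0) = 0"
    "\<forall>q r x. smooth_at q x \<longrightarrow> smooth_at r x \<longrightarrow> (along Z q r has_real_derivative along W q r x) (at x)"
    using diffpoly_along_has_derivative[OF assms] by blast
  have "Dx Z = W"
    unfolding Dx_def
  proof (rule the_equality)
    show "diffpoly W \<and> (\<forall>q r x. smooth q \<longrightarrow> smooth r \<longrightarrow>
        (along Z q r has_real_derivative along W q r x) (at x))"
      using W smooth_imp_smooth_at by blast
    fix W' assume W': "diffpoly W' \<and> (\<forall>q r x. smooth q \<longrightarrow> smooth r \<longrightarrow>
        (along Z q r has_real_derivative along W' q r x) (at x))"
    have "W' Q R - W Q R = 0" for Q R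
    proof (rule diffpoly_eq_0_if_along_eq_0[where W = "\<lambda>Q R. W' Q R - W Q R"])
      show "diffpoly (\<lambda>Q R. W' Q R - W Q R)" using W W' by (intro diffpoly_diff) auto
      fix q r x assume "smooth q" "smooth r"
      then have "along W' q r x = along W q r x"
        using W W' smooth_imp_smooth_at DERIV_unique by metis
      then show "along (\<lambda>Q R. W' Q R - W Q R) q r x = 0" by (simp add: along_def)
    qed
    then show "W' = W" by (auto simp: fun_eq_iff)
  qed
  with W show ?thesis by simp
qed

lemma diffpoly_Dx: "diffpoly Z \<Longrightarrow> diffpoly (Dx Z)"
  using Dx_spec by blast

lemma Dx_zero_jet: "diffpoly Z \<Longrightarrow> Dx Z (\<lambda>_. 0) (\<lambda>_. 0) = 0"
  using Dx_spec by blast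

lemma has_real_derivative_along_Dx:
  "diffpoly Z \<Longrightarrow> smooth_at q x \<Longrightarrow> smooth_at r x \<Longrightarrow>
    (along Z q r has_real_derivative along (Dx Z) q r x) (at x)"
  using Dx_spec by blast

lemma Dx_const: "Dx (\<lambda>Q R. c) = (\<lambda>Q R. 0)"
proof -
  have "Dx (\<lambda>Q R. c) Q R = 0" for Q R
  proof (rule diffpoly_eq_0_if_along_eq_0[OF diffpoly_Dx[OF dp_const]])
    fix q r x assume "smooth q" "smooth r"
    then have "(along (\<lambda>Q R. c) q r has_real_derivative along (Dx (\<lambda>Q R. c)) q r x) (at x)"
      by (intro has_real_derivative_along_Dx dp_const smooth_imp_smooth_at)
    then have "((\<lambda>x. c) has_real_derivative along (Dx (\<lambda>Q R. c)) q r x) (at x)"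
      by (simp add: along_eq)
    then show "along (Dx (\<lambda>Q R. c)) q r x = 0" using DERIV_const DERIV_unique by blast
  qed
  then show ?thesis by (auto simp: fun_eq_iff)
qed

lemma Dinv_eqI:
  assumes "diffpoly W" "W (\<lambda>_. 0) (\<lambda>_. 0) = 0"
    and "\<And>q r x. smooth q \<Longrightarrow> smooth r \<Longrightarrow> (along W q r has_real_derivative along Z q r x) (at x)"
  shows "Dinv Z = W"
  unfolding Dinv_def
proof (rule the_equality)
  show "diffpoly W \<and> W (\<lambda>_. 0) (\<lambda>_. 0) = 0 \<and> (\<forall>q r x. smooth q \<longrightarrow> smooth r \<longrightarrow>
      (along W q r has_real_derivative along Z q r x) (at x))"
    using assms by blast
  fix W' assume W': "diffpoly W' \<and> W' (\<lambda>_. 0) (\<lambda>_. 0) = 0 \<and> (\<forall>q r x. smooth q \<longrightarrow> smooth r \<longrightarrow>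
      (along W' q r has_real_derivative along Z q r x) (at x))"
  have "W' Q R - W Q R = 0" for Q R
  proof (rule diffpoly_eq_0_if_along_const[where W = "\<lambda>Q R. W' Q R - W Q R"])
    show "diffpoly (\<lambda>Q R. W' Q R - W Q R)" using W' assms by (intro diffpoly_diff) auto
    show "W' (\<lambda>_. 0) (\<lambda>_. 0) - W (\<lambda>_. 0) (\<lambda>_. 0) = 0" using W' assms by simp
    fix q r x assume "smooth q" "smooth r"
    then have "((\<lambda>x. along W' q r x - along W q r x) has_real_derivative
        along Z q r x - along Z q r x) (at x)"
      using W' assms by (intro DERIV_diff) auto
    then show "(along (\<lambda>Q R. W' Q R - W Q R) q r has_real_derivative 0) (at x)"
      by (simp add: along_eq)
  qed
  then show "W' = W" by (auto simp: fun_eq_iff)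
qed

section \<open>The recursion for the differential polynomials a, b, c\<close>

lemma abc_0: "a_dp 0 = (\<lambda>Q R. -1)" "b_dp 0 = (\<lambda>Q R. 0)" "c_dp 0 = (\<lambda>Q R. 0)"
  by (simp_all add: a_dp_def b_dp_def c_dp_def)

lemma abc_Suc:
  "a_dp (Suc i) = (\<lambda>Q R. (1/2) * Dinv (\<lambda>Q R. Q 0 * Dx (c_dp i) Q R + R 0 * Dx (b_dp i) Q R) Q R)"
  "b_dp (Suc i) = (\<lambda>Q R. -(1/2) * Dx (b_dp i) Q R - Q 0 * a_dp i Q R)"
  "c_dp (Suc i) = (\<lambda>Q R. (1/2) * Dx (c_dp i) Q R - R 0 * a_dp i Q R)"
  by (cases "abc i" rule: prod_cases3; simp add: a_dp_def b_dp_def c_dp_def)+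

lemma Dx_b_dp: "Dx (b_dp m) Q R = -2 * b_dp (Suc m) Q R - 2 * Q 0 * a_dp m Q R"
  by (simp add: abc_Suc)

lemma Dx_c_dp: "Dx (c_dp m) Q R = 2 * c_dp (Suc m) Q R + 2 * R 0 * a_dp m Q R"
  by (simp add: abc_Suc)

lemma a_dp_Suc_Dinv:
  "a_dp (Suc m) = (\<lambda>Q R. 1/2 * Dinv (\<lambda>Q R. 2 * (Q 0 * c_dp (Suc m) Q R - R 0 * b_dp (Suc m) Q R)) Q R)"
proof -
  have "(\<lambda>Q R. Q 0 * Dx (c_dp m) Q R + R 0 * Dx (b_dp m) Q R)
      = (\<lambda>Q R. 2 * (Q 0 * c_dp (Suc m) Q R - R 0 * b_dp (Suc m) Q R))"
    by (simp add: Dx_b_dp Dx_c_dp fun_eq_iff algebra_simps)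
  then show ?thesis by (simp add: abc_Suc(1))
qed

lemma along_b_dp_Suc:
  "along (b_dp (Suc m)) q r x = -(1/2) * along (Dx (b_dp m)) q r x - q x * along (a_dp m) q r x"
  by (simp add: abc_Suc along_def jet_def)

lemma along_c_dp_Suc:
  "along (c_dp (Suc m)) q r x = (1/2) * along (Dx (c_dp m)) q r x - r x * along (a_dp m) q r x"
  by (simp add: abc_Suc along_def jet_def)

lemma b_dp_1: "b_dp 1 = (\<lambda>Q R. Q 0)" and c_dp_1: "c_dp 1 = (\<lambda>Q R. R 0)"
  by (simp_all add: abc_Suc[where i = 0, simplified] abc_0 Dx_const)

lemma has_derivative_along_b_dp:
  "diffpoly (b_dp j) \<Longrightarrow> smooth_at q x \<Longrightarrow> smooth_at r x \<Longrightarrow>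
    (along (b_dp j) q r has_real_derivative
      -2 * along (b_dp (Suc j)) q r x - 2 * q x * along (a_dp j) q r x) (at x)"
  using has_real_derivative_along_Dx[of "b_dp j" q x r]
  by (simp add: Dx_b_dp along_def jet_def)

lemma has_derivative_along_c_dp:
  "diffpoly (c_dp j) \<Longrightarrow> smooth_at q x \<Longrightarrow> smooth_at r x \<Longrightarrow>
    (along (c_dp j) q r has_real_derivative
      2 * along (c_dp (Suc j)) q r x + 2 * r x * along (a_dp j) q r x) (at x)"
  using has_real_derivative_along_Dx[of "c_dp j" q x r]
  by (simp add: Dx_c_dp along_def jet_def)

lemma sum_reflect: "(\<Sum>i=1..m. f i * g (Suc m - i)) = (\<Sum>i=1..m. f (Suc m - i) * (g i :: real))"
  by (rule sum.reindex_bij_witness[where i = "\<lambda>i. Suc m - i" and j = "\<lambda>i. Suc m - i"]) auto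

text \<open>The terms coming from a' = q c - r b cancel under i \<leftrightarrow> m+1-i; those coming
  from b' and c' telescope.\<close>
lemma quadratic_sum_telescope:
  fixes \<alpha> \<beta> \<gamma> \<alpha>' \<beta>' \<gamma>' :: "nat \<Rightarrow> real"
  assumes "\<And>i. i \<le> m \<Longrightarrow> \<alpha>' i = q * \<gamma> i - r * \<beta> i"
    and "\<And>i. i \<le> m \<Longrightarrow> \<beta>' i = -2 * \<beta> (Suc i) - 2 * q * \<alpha> i"
    and "\<And>i. i \<le> m \<Longrightarrow> \<gamma>' i = 2 * \<gamma> (Suc i) + 2 * r * \<alpha> i"
    and "\<beta> 1 = q" "\<gamma> 1 = r"
  shows "(\<Sum>i=1..m. \<alpha> i * \<alpha>' (Suc m - i) + \<alpha>' i * \<alpha> (Suc m - i)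
            + (\<beta> i * \<gamma>' (Suc m - i) + \<beta>' i * \<gamma> (Suc m - i)))
         = 2 * (q * \<gamma> (Suc m) - r * \<beta> (Suc m))"
proof -
  define h where "h i = \<beta> i * \<gamma> (Suc (Suc m) - i)" for i
  have "(\<Sum>i=1..m. \<alpha> i * \<alpha>' (Suc m - i) + \<alpha>' i * \<alpha> (Suc m - i)
            + (\<beta> i * \<gamma>' (Suc m - i) + \<beta>' i * \<gamma> (Suc m - i)))
     = (\<Sum>i=1..m. q * (\<gamma> i * \<alpha> (Suc m - i) - \<alpha> i * \<gamma> (Suc m - i))
          + r * (\<beta> i * \<alpha> (Suc m - i) - \<alpha> i * \<beta> (Suc m - i)) + 2 * (h i - h (Suc i)))"
    by (rule sum.cong) (auto simp: assms(1-3) h_def Suc_diff_le algebra_simps)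
  also have "\<dots> = q * ((\<Sum>i=1..m. \<gamma> i * \<alpha> (Suc m - i)) - (\<Sum>i=1..m. \<alpha> i * \<gamma> (Suc m - i)))
      + r * ((\<Sum>i=1..m. \<beta> i * \<alpha> (Suc m - i)) - (\<Sum>i=1..m. \<alpha> i * \<beta> (Suc m - i)))
      + 2 * (\<Sum>i=1..m. h i - h (Suc i))"
    by (simp add: sum.distrib sum_subtractf sum_distrib_left right_diff_distrib)
  also have "\<dots> = 2 * (h 1 - h (Suc m))"
    using sum_reflect[of \<gamma> \<alpha> m] sum_reflect[of \<beta> \<alpha> m] sum_Suc_diff[of 1 m "\<lambda>i. - h i"]
    by (simp add: mult.commute)
  also have "\<dots> = 2 * (q * \<gamma> (Suc m) - r * \<beta> (Suc m))"
    using assms(4,5) by (simp add: h_def)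
  finally show ?thesis .
qed

definition abc_invariant :: "nat \<Rightarrow> bool" where
  "abc_invariant j \<longleftrightarrow> diffpoly (a_dp j) \<and> diffpoly (b_dp j) \<and> diffpoly (c_dp j) \<and>
    (0 < j \<longrightarrow> a_dp j (\<lambda>_. 0) (\<lambda>_. 0) = 0 \<and> b_dp j (\<lambda>_. 0) (\<lambda>_. 0) = 0 \<and> c_dp j (\<lambda>_. 0) (\<lambda>_. 0) = 0) \<and>
    (\<forall>q r x. smooth q \<longrightarrow> smooth r \<longrightarrow>
       (along (a_dp j) q r has_real_derivative
          q x * along (c_dp j) q r x - r x * along (b_dp j) q r x) (at x))"

definition abc_quadratic :: "nat \<Rightarrow> jetfun" where
  "abc_quadratic m = (\<lambda>Q R. \<Sum>i=1..m. a_dp i Q R * a_dp (Suc m - i) Q R + b_dp i Q R * c_dp (Suc m - i) Q R)"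

lemma abc_quadratic_has_derivative:
  assumes inv: "\<forall>j\<le>m. abc_invariant j" and "smooth q" "smooth r"
  shows "(along (abc_quadratic m) q r has_real_derivative
           2 * (q x * along (c_dp (Suc m)) q r x - r x * along (b_dp (Suc m)) q r x)) (at x)"
proof -
  define \<alpha> where "\<alpha> j = along (a_dp j) q r x" for j
  define \<beta> where "\<beta> j = along (b_dp j) q r x" for j
  define \<gamma> where "\<gamma> j = along (c_dp j) q r x" for j
  define \<alpha>' where "\<alpha>' j = q x * \<gamma> j - r x * \<beta> j" for j
  define \<beta>' where "\<beta>' j = -2 * \<beta> (Suc j) - 2 * q x * \<alpha> j" for j
  define \<gamma>' where "\<gamma>' j = 2 * \<gamma> (Suc j) + 2 * r x * \<alpha> j" for j
  have invj: "abc_invariant j" if "j \<le> m" for j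
    using inv that by blast
  have smooth_at: "smooth_at q x" "smooth_at r x"
    using assms(2,3) smooth_imp_smooth_at by auto
  have a': "(along (a_dp j) q r has_real_derivative \<alpha>' j) (at x)" if "j \<le> m" for j
    using invj[OF that] assms(2,3) by (simp add: abc_invariant_def \<alpha>'_def \<beta>_def \<gamma>_def)
  have b': "(along (b_dp j) q r has_real_derivative \<beta>' j) (at x)" if "j \<le> m" for j
    using invj[OF that] has_derivative_along_b_dp[OF _ smooth_at, of j]
    by (simp add: abc_invariant_def \<beta>'_def \<alpha>_def \<beta>_def)
  have c': "(along (c_dp j) q r has_real_derivative \<gamma>' j) (at x)" if "j \<le> m" for j
    using invj[OF that] has_derivative_along_c_dp[OF _ smooth_at, of j]
    by (simp add: abc_invariant_def \<gamma>'_def \<alpha>_def \<gamma>_def)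
  have "along (abc_quadratic m) q r = (\<lambda>y. \<Sum>i=1..m. along (a_dp i) q r y * along (a_dp (Suc m - i)) q r y
      + along (b_dp i) q r y * along (c_dp (Suc m - i)) q r y)"
    by (simp add: abc_quadratic_def along_eq)
  moreover have "((\<lambda>y. \<Sum>i=1..m. along (a_dp i) q r y * along (a_dp (Suc m - i)) q r y
      + along (b_dp i) q r y * along (c_dp (Suc m - i)) q r y) has_real_derivative
      (\<Sum>i=1..m. \<alpha> i * \<alpha>' (Suc m - i) + \<alpha>' i * \<alpha> (Suc m - i)
            + (\<beta> i * \<gamma>' (Suc m - i) + \<beta>' i * \<gamma> (Suc m - i)))) (at x)"
    unfolding \<alpha>_def \<beta>_def \<gamma>_def
    by (intro DERIV_sum DERIV_add DERIV_mult' a' b' c') auto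
  moreover have "(\<Sum>i=1..m. \<alpha> i * \<alpha>' (Suc m - i) + \<alpha>' i * \<alpha> (Suc m - i)
            + (\<beta> i * \<gamma>' (Suc m - i) + \<beta>' i * \<gamma> (Suc m - i)))
      = 2 * (q x * \<gamma> (Suc m) - r x * \<beta> (Suc m))"
    by (rule quadratic_sum_telescope)
       (simp_all add: \<alpha>'_def \<beta>'_def \<gamma>'_def \<beta>_def \<gamma>_def b_dp_1 c_dp_1 along_jet_0 del: One_nat_def)
  ultimately show ?thesis by (simp add: \<beta>_def \<gamma>_def)
qed

lemma diffpoly_abc_quadratic: "\<forall>j\<le>m. abc_invariant j \<Longrightarrow> diffpoly (abc_quadratic m)"
  unfolding abc_quadratic_def by (intro diffpoly_sum dp_add dp_mult) (auto simp: abc_invariant_def)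

lemma abc_quadratic_zero_jet:
  "\<forall>j\<le>m. abc_invariant j \<Longrightarrow> abc_quadratic m (\<lambda>_. 0) (\<lambda>_. 0) = 0"
  unfolding abc_quadratic_def by (intro sum.neutral) (auto simp: abc_invariant_def)

lemma a_dp_Suc_quadratic:
  assumes inv: "\<forall>j\<le>m. abc_invariant j"
  shows "a_dp (Suc m) = (\<lambda>Q R. 1/2 * abc_quadratic m Q R)"
proof -
  have "Dinv (\<lambda>Q R. 2 * (Q 0 * c_dp (Suc m) Q R - R 0 * b_dp (Suc m) Q R)) = abc_quadratic m"
  proof (rule Dinv_eqI)
    show "diffpoly (abc_quadratic m)" using inv by (rule diffpoly_abc_quadratic)
    show "abc_quadratic m (\<lambda>_. 0) (\<lambda>_. 0) = 0" using inv by (rule abc_quadratic_zero_jet)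
    fix q r x assume "smooth q" "smooth r"
    then show "(along (abc_quadratic m) q r has_real_derivative
        along (\<lambda>Q R. 2 * (Q 0 * c_dp (Suc m) Q R - R 0 * b_dp (Suc m) Q R)) q r x) (at x)"
      using abc_quadratic_has_derivative[OF inv] by (simp add: along_def jet_def)
  qed
  then show ?thesis by (simp add: a_dp_Suc_Dinv)
qed

lemma abc_invariant_Suc:
  assumes inv: "\<forall>j\<le>m. abc_invariant j"
  shows "abc_invariant (Suc m)"
proof -
  have m: "diffpoly (a_dp m)" "diffpoly (b_dp m)" "diffpoly (c_dp m)"
    using inv by (auto simp: abc_invariant_def)
  have "diffpoly (b_dp (Suc m))" "diffpoly (c_dp (Suc m))"
    unfolding abc_Suc by (intro diffpoly_diff diffpoly_cmult dp_mult dp_q dp_r diffpoly_Dx m)+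
  moreover have "b_dp (Suc m) (\<lambda>_. 0) (\<lambda>_. 0) = 0" "c_dp (Suc m) (\<lambda>_. 0) (\<lambda>_. 0) = 0"
    by (simp_all add: abc_Suc Dx_zero_jet m)
  moreover have "diffpoly (a_dp (Suc m))"
    unfolding a_dp_Suc_quadratic[OF inv] by (rule diffpoly_cmult[OF diffpoly_abc_quadratic[OF inv]])
  moreover have "a_dp (Suc m) (\<lambda>_. 0) (\<lambda>_. 0) = 0"
    by (simp add: a_dp_Suc_quadratic[OF inv] abc_quadratic_zero_jet[OF inv])
  moreover have "(along (a_dp (Suc m)) q r has_real_derivative
      q x * along (c_dp (Suc m)) q r x - r x * along (b_dp (Suc m)) q r x) (at x)"
    if "smooth q" "smooth r" for q r x
    using DERIV_cmult[OF abc_quadratic_has_derivative[OF inv that], of "1/2"]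
    by (simp add: a_dp_Suc_quadratic[OF inv] along_eq)
  ultimately show ?thesis by (simp add: abc_invariant_def)
qed

lemma abc_invariant: "abc_invariant m"
proof (induction m rule: less_induct)
  case (less m)
  show ?case
  proof (cases m)
    case 0
    then show ?thesis by (auto simp: abc_invariant_def abc_0 along_eq intro: diffpoly.intros)
  next
    case (Suc k)
    then show ?thesis using less by (auto intro: abc_invariant_Suc)
  qed
qed

lemma diffpoly_b_dp: "diffpoly (b_dp m)" and diffpoly_c_dp: "diffpoly (c_dp m)"
  using abc_invariant[of m] by (simp_all add: abc_invariant_def)

lemma along_a_dp_Suc:
  "along (a_dp (Suc m)) q r x = 1/2 * (\<Sum>i=1..m. along (a_dp i) q r x * along (a_dp (Suc m - i)) q r x
                                     + along (b_dp i) q r x * along (c_dp (Suc m - i)) q r x)"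
  using a_dp_Suc_quadratic abc_invariant by (simp add: abc_quadratic_def along_def)

section \<open>Formal power series\<close>

definition compositions :: "nat \<Rightarrow> nat \<Rightarrow> nat list set" where
  "compositions n m = {is. length is = n \<and> (\<forall>i\<in>set is. 1 \<le> i) \<and> sum_list is = m}"

lemma finite_compositions: "finite (compositions n m)"
proof (rule finite_subset)
  show "compositions n m \<subseteq> {xs. set xs \<subseteq> {0..m} \<and> length xs = n}"
    unfolding compositions_def using member_le_sum_list by fastforce
  show "finite {xs. set xs \<subseteq> {0..m} \<and> length xs = n}"
    by (rule finite_lists_length_eq) simp
qed

lemma compositions_0: "compositions 0 m = (if m = 0 then {[]} else {})"
  by (auto simp: compositions_def)

lemma compositions_Suc:
  "compositions (Suc n) m = (\<lambda>(k, is). k # is) ` (SIGMA k:{1..m}. compositions n (m - k))"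
proof (rule set_eqI)
  fix xs
  show "xs \<in> compositions (Suc n) m \<longleftrightarrow> xs \<in> (\<lambda>(k, is). k # is) ` (SIGMA k:{1..m}. compositions n (m - k))"
  proof
    assume "xs \<in> compositions (Suc n) m"
    then obtain k ys where "xs = k # ys" "(k, ys) \<in> (SIGMA k:{1..m}. compositions n (m - k))"
      unfolding compositions_def by (cases xs) auto
    then show "xs \<in> (\<lambda>(k, is). k # is) ` (SIGMA k:{1..m}. compositions n (m - k))" by force
  qed (auto simp: compositions_def)
qed

lemma fps_power_nth_compositions:
  fixes f :: "'a::comm_ring_1 fps"
  assumes "f $ 0 = 0"
  shows "(f ^ n) $ m = (\<Sum>is\<in>compositions n m. prod_list (map (\<lambda>k. f $ k) is))"
proof (induction n arbitrary: m)
  case 0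
  then show ?case by (simp add: compositions_0)
next
  case (Suc n)
  have "(f ^ Suc n) $ m = (\<Sum>k=1..m. f $ k * (f ^ n) $ (m - k))"
    using assms by (simp add: fps_mult_nth sum.atLeast_Suc_atMost)
  also have "\<dots> = (\<Sum>(k, is)\<in>(SIGMA k:{1..m}. compositions n (m - k)). prod_list (map (\<lambda>k. f $ k) (k # is)))"
    by (simp add: Suc sum_distrib_left sum.Sigma finite_compositions)
  also have "\<dots> = (\<Sum>is\<in>compositions (Suc n) m. prod_list (map (\<lambda>k. f $ k) is))"
    unfolding compositions_Suc by (subst sum.reindex) (auto simp: inj_on_def case_prod_beta)
  finally show ?case .
qed

lemma fps_numeral_mult_nth: "((numeral w :: 'a::comm_ring_1 fps) * f) $ n = numeral w * f $ n"
  by (simp add: fps_numeral_fps_const)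

lemma fps_quadratic_recursion:
  fixes a b c :: "'a::field_char_0 fps"
  assumes "a $ 0 = -1" "b $ 0 = 0" "c $ 0 = 0" "a ^ 2 + b * c = 1"
  shows "a $ Suc m = (\<Sum>i=1..m. a $ i * a $ (Suc m - i) + b $ i * c $ (Suc m - i)) / 2"
proof -
  have split: "(\<Sum>i=0..Suc m. f i * g (Suc m - i)) = f 0 * g (Suc m) + (\<Sum>i=1..m. f i * g (Suc m - i)) + f (Suc m) * g 0"
    for f g :: "nat \<Rightarrow> 'a"
    by (simp add: sum.atLeast_Suc_atMost sum.cl_ivl_Suc)
  have "(a ^ 2 + b * c) $ Suc m = 0" using assms(4) by simp
  then have "(\<Sum>i=0..Suc m. a $ i * a $ (Suc m - i)) + (\<Sum>i=0..Suc m. b $ i * c $ (Suc m - i)) = 0"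
    by (simp add: power2_eq_square fps_mult_nth)
  moreover have "(\<Sum>i=0..Suc m. a $ i * a $ (Suc m - i)) = -2 * a $ Suc m + (\<Sum>i=1..m. a $ i * a $ (Suc m - i))"
    unfolding split using assms(1) by simp
  moreover have "(\<Sum>i=0..Suc m. b $ i * c $ (Suc m - i)) = (\<Sum>i=1..m. b $ i * c $ (Suc m - i))"
    unfolding split using assms(2,3) by simp
  ultimately have "2 * a $ Suc m = (\<Sum>i=1..m. a $ i * a $ (Suc m - i)) + (\<Sum>i=1..m. b $ i * c $ (Suc m - i))"
    by algebra
  then show ?thesis by (simp add: sum.distrib field_simps)
qed

definition d_fps :: "real fps" where "d_fps = 1 + Abs_fps dn"

lemma dn_recurrence:
  assumes "3 \<le> n"
  shows "dn n = -(1/2) * (\<Sum>i=1..n-1. dn i * dn (n - i)) - (1/4) * dn (n - 1)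
    - (1/8) * (\<Sum>i=1..n-2. dn i * dn (n - i - 1))"
proof -
  define k where "k = n - 3"
  have "n = Suc (Suc (Suc k))" using assms by (simp add: k_def)
  then show ?thesis by (simp only: dn.simps(4) Let_def)
qed

lemma d_fps_square_nth:
  "(d_fps ^ 2) $ n = (if n = 0 then 1 else 2 * dn n + (\<Sum>i=1..n-1. dn i * dn (n - i)))"
proof -
  have "d_fps ^ 2 = 1 + Abs_fps dn + Abs_fps dn + Abs_fps dn * Abs_fps dn"
    by (simp add: d_fps_def power2_eq_square algebra_simps)
  then have sq: "(d_fps ^ 2) $ n = (1 :: real fps) $ n + 2 * dn n + (\<Sum>i=0..n. dn i * dn (n - i))"
    by (simp only: fps_add_nth fps_mult_nth) simp
  show ?thesis
    unfolding sq
  proof (cases n)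
    case (Suc k)
    have "(\<Sum>i=0..Suc k. dn i * dn (Suc k - i)) = (\<Sum>i=1..k. dn i * dn (Suc k - i))"
      by (simp add: sum.atLeast_Suc_atMost sum.cl_ivl_Suc)
    with Suc show "(1 :: real fps) $ n + 2 * dn n + (\<Sum>i=0..n. dn i * dn (n - i))
      = (if n = 0 then 1 else 2 * dn n + (\<Sum>i=1..n-1. dn i * dn (n - i)))" by simp
  qed simp
qed

text \<open>That is, d_fps = (1 + X/4)^(-1/2).\<close>
lemma d_fps_square: "d_fps ^ 2 * (1 + fps_const (1/4) * fps_X) = 1"
proof (rule fps_ext)
  fix n
  have "(d_fps ^ 2 * (1 + fps_const (1/4) * fps_X)) $ n
      = (d_fps ^ 2) $ n + (if n = 0 then 0 else (1/4) * (d_fps ^ 2) $ (n - 1))"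
    by (simp add: algebra_simps)
  also have "\<dots> = (1 :: real fps) $ n"
  proof -
    consider "n = 0" | "n = Suc 0" | "n = Suc (Suc 0)" | "3 \<le> n" by linarith
    then show ?thesis
    proof cases
      case 4
      have "(\<Sum>i=1..n-1-1. dn i * dn (n - 1 - i)) = (\<Sum>i=1..n-2. dn i * dn (n - i - 1))"
        by (intro sum.cong) auto
      with 4 show ?thesis by (simp add: d_fps_square_nth dn_recurrence[OF 4] field_simps)
    qed (simp_all add: d_fps_square_nth)
  qed
  finally show "(d_fps ^ 2 * (1 + fps_const (1/4) * fps_X)) $ n = (1 :: real fps) $ n" .
qed

lemma d_fps_compose_nth:
  fixes f :: "real fps"
  assumes "f $ 0 = 0"
  shows "(d_fps oo f) $ m = (if m = 0 then 1 else (\<Sum>n=1..m. dn n * (f ^ n) $ m))"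
proof (cases "m = 0")
  case False
  have "(d_fps oo f) $ m = (\<Sum>i=1..m. d_fps $ i * (f ^ i) $ m)"
    using False by (simp add: fps_compose_nth sum.atLeast_Suc_atMost)
  also have "\<dots> = (\<Sum>i=1..m. dn i * (f ^ i) $ m)"
    by (intro sum.cong) (auto simp: d_fps_def)
  finally show ?thesis using False by simp
qed (simp add: d_fps_def)

lemma d_fps_compose_square:
  fixes f :: "real fps"
  assumes f0: "f $ 0 = 0"
  shows "(d_fps oo f) ^ 2 * (1 + fps_const (1/4) * f) = 1"
proof -
  have "(d_fps oo f) ^ 2 * (1 + fps_const (1/4) * f) = (d_fps ^ 2 * (1 + fps_const (1/4) * fps_X)) oo f"
    using f0 by (simp add: fps_compose_mult_distrib fps_compose_add_distrib power2_eq_square)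
  also have "\<dots> = 1" by (simp add: d_fps_square)
  finally show ?thesis .
qed

definition fps_has_derivative :: "(real \<Rightarrow> real fps) \<Rightarrow> real fps \<Rightarrow> real \<Rightarrow> bool" where
  "fps_has_derivative A A' x \<longleftrightarrow> (\<forall>k. ((\<lambda>z. A z $ k) has_real_derivative A' $ k) (at x))"

lemma fps_has_derivative_const: "fps_has_derivative (\<lambda>z. C) 0 x"
  unfolding fps_has_derivative_def by simp

lemma fps_has_derivative_add:
  "fps_has_derivative A A' x \<Longrightarrow> fps_has_derivative B B' x \<Longrightarrow> fps_has_derivative (\<lambda>z. A z + B z) (A' + B') x"
  unfolding fps_has_derivative_def by (auto intro: DERIV_add)

lemma fps_has_derivative_diff:
  "fps_has_derivative A A' x \<Longrightarrow> fps_has_derivative B B' x \<Longrightarrow> fps_has_derivative (\<lambda>z. A z - B z) (A' - B') x"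
  unfolding fps_has_derivative_def by (auto intro: DERIV_diff)

lemma fps_has_derivative_mult:
  assumes "fps_has_derivative A A' x" "fps_has_derivative B B' x"
  shows "fps_has_derivative (\<lambda>z. A z * B z) (A' * B x + A x * B') x"
  unfolding fps_has_derivative_def
proof
  fix k
  have "((\<lambda>z. \<Sum>i=0..k. A z $ i * B z $ (k - i)) has_real_derivative
      (\<Sum>i=0..k. A x $ i * B' $ (k - i) + A' $ i * B x $ (k - i))) (at x)"
    using assms unfolding fps_has_derivative_def by (intro DERIV_sum DERIV_mult') auto
  then show "((\<lambda>z. (A z * B z) $ k) has_real_derivative (A' * B x + A x * B') $ k) (at x)"
    by (simp add: fps_mult_nth sum.distrib add.commute)
qed

lemma fps_has_derivative_const_mult:
  "fps_has_derivative A A' x \<Longrightarrow> fps_has_derivative (\<lambda>z. C * A z) (C * A') x"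
  using fps_has_derivative_mult[OF fps_has_derivative_const] by simp

lemma fps_has_derivative_power_0:
  assumes "fps_has_derivative A 0 x"
  shows "fps_has_derivative (\<lambda>z. A z ^ n) 0 x"
proof (induction n)
  case 0
  then show ?case using fps_has_derivative_const[of 1 x] by simp
next
  case (Suc n)
  then show ?case using fps_has_derivative_mult[OF assms Suc.IH] by simp
qed

section \<open>Solutions of the nonlinearized spatial system\<close>

locale spatial_solution =
  fixes N :: nat and lam mu :: "nat \<Rightarrow> real"
    and \<phi> \<psi> :: "nat \<Rightarrow> nat \<Rightarrow> real \<Rightarrow> real"
    and J :: "real set"
    and qt rt :: "real \<Rightarrow> real"
  assumes J: "open J"
    and qt: "\<And>x. qt x = sqrt 2 * (ip lam mu N (\<lambda>i j. \<phi> i j x) (\<lambda>i j. \<psi> i j x) 0 1 2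
                                  + ip lam mu N (\<lambda>i j. \<phi> i j x) (\<lambda>i j. \<psi> i j x) 0 2 3)"
    and rt: "\<And>x. rt x = sqrt 2 * (ip lam mu N (\<lambda>i j. \<phi> i j x) (\<lambda>i j. \<psi> i j x) 0 2 1
                                  + ip lam mu N (\<lambda>i j. \<phi> i j x) (\<lambda>i j. \<psi> i j x) 0 3 2)"
    and ode_phi1: "\<And>j x. j \<in> {1..N} \<Longrightarrow> x \<in> J \<Longrightarrow>
       (\<phi> 1 j has_real_derivative (-2 * lam j * \<phi> 1 j x + sqrt 2 * qt x * \<phi> 2 j x)) (at x)"
    and ode_phi2: "\<And>j x. j \<in> {1..N} \<Longrightarrow> x \<in> J \<Longrightarrow>
       (\<phi> 2 j has_real_derivative (sqrt 2 * rt x * \<phi> 1 j x + sqrt 2 * qt x * \<phi> 3 j x)) (at x)"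
    and ode_phi3: "\<And>j x. j \<in> {1..N} \<Longrightarrow> x \<in> J \<Longrightarrow>
       (\<phi> 3 j has_real_derivative (sqrt 2 * rt x * \<phi> 2 j x + 2 * lam j * \<phi> 3 j x)) (at x)"
    and ode_psi1: "\<And>j x. j \<in> {1..N} \<Longrightarrow> x \<in> J \<Longrightarrow>
       (\<psi> 1 j has_real_derivative (2 * lam j * \<psi> 1 j x - sqrt 2 * rt x * \<psi> 2 j x)) (at x)"
    and ode_psi2: "\<And>j x. j \<in> {1..N} \<Longrightarrow> x \<in> J \<Longrightarrow>
       (\<psi> 2 j has_real_derivative (- sqrt 2 * qt x * \<psi> 1 j x - sqrt 2 * rt x * \<psi> 3 j x)) (at x)"
    and ode_psi3: "\<And>j x. j \<in> {1..N} \<Longrightarrow> x \<in> J \<Longrightarrow>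
       (\<psi> 3 j has_real_derivative (- sqrt 2 * qt x * \<psi> 2 j x - 2 * lam j * \<psi> 3 j x)) (at x)"
begin

inductive_set phase_polys :: "(real \<Rightarrow> real) set" where
  phase_polys_const: "(\<lambda>x. c) \<in> phase_polys"
| phase_polys_phi: "j \<in> {1..N} \<Longrightarrow> i \<in> {1, 2, 3} \<Longrightarrow> \<phi> i j \<in> phase_polys"
| phase_polys_psi: "j \<in> {1..N} \<Longrightarrow> i \<in> {1, 2, 3} \<Longrightarrow> \<psi> i j \<in> phase_polys"
| phase_polys_add: "f \<in> phase_polys \<Longrightarrow> g \<in> phase_polys \<Longrightarrow> (\<lambda>x. f x + g x) \<in> phase_polys"
| phase_polys_mult: "f \<in> phase_polys \<Longrightarrow> g \<in> phase_polys \<Longrightarrow> (\<lambda>x. f x * g x) \<in> phase_polys"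

lemma phase_polys_sum: "(\<And>j. j \<in> S \<Longrightarrow> f j \<in> phase_polys) \<Longrightarrow> (\<lambda>x. \<Sum>j\<in>S. f j x) \<in> phase_polys"
proof (induction S rule: infinite_finite_induct)
  case (insert a S)
  then show ?case using phase_polys_add[of "f a" "\<lambda>x. \<Sum>j\<in>S. f j x"] by simp
qed (use phase_polys_const[of 0] in simp_all)

lemma qt_phase_polys: "qt \<in> phase_polys" and rt_phase_polys: "rt \<in> phase_polys"
proof -
  have "(\<lambda>x. sqrt 2 * (ip lam mu N (\<lambda>i j. \<phi> i j x) (\<lambda>i j. \<psi> i j x) 0 a b
      + ip lam mu N (\<lambda>i j. \<phi> i j x) (\<lambda>i j. \<psi> i j x) 0 c d)) \<in> phase_polys"
    if "a \<in> {1, 2, 3}" "b \<in> {1, 2, 3}" "c \<in> {1, 2, 3}" "d \<in> {1, 2, 3}" for a b c d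
    unfolding ip_def using that
    by (intro phase_polys_mult phase_polys_add phase_polys_const phase_polys_sum
        phase_polys_phi phase_polys_psi) auto
  then show "qt \<in> phase_polys" "rt \<in> phase_polys"
    unfolding qt[abs_def] rt[abs_def] by auto
qed

lemma phase_polys_has_derivative:
  "f \<in> phase_polys \<Longrightarrow> \<exists>g\<in>phase_polys. \<forall>x\<in>J. (f has_real_derivative g x) (at x)"
proof (induction rule: phase_polys.induct)
  case (phase_polys_const c)
  show ?case by (intro bexI[of _ "\<lambda>x. 0"] phase_polys.intros) auto
next
  case (phase_polys_phi j i)
  note pp = phase_polys.intros qt_phase_polys rt_phase_polys
  from \<open>i \<in> {1, 2, 3}\<close> consider "i = 1" | "i = 2" | "i = 3" by auto
  then show ?case
  proof cases
    case 1
    show ?thesis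
      by (rule bexI[of _ "\<lambda>x. -2 * lam j * \<phi> 1 j x + sqrt 2 * qt x * \<phi> 2 j x"])
         (use 1 phase_polys_phi.hyps ode_phi1 in simp, intro pp, use phase_polys_phi.hyps in auto)
  next
    case 2
    show ?thesis
      by (rule bexI[of _ "\<lambda>x. sqrt 2 * rt x * \<phi> 1 j x + sqrt 2 * qt x * \<phi> 3 j x"])
         (use 2 phase_polys_phi.hyps ode_phi2 in simp, intro pp, use phase_polys_phi.hyps in auto)
  next
    case 3
    show ?thesis
      by (rule bexI[of _ "\<lambda>x. sqrt 2 * rt x * \<phi> 2 j x + 2 * lam j * \<phi> 3 j x"])
         (use 3 phase_polys_phi.hyps ode_phi3 in simp, intro pp, use phase_polys_phi.hyps in auto)
  qed
next
  case (phase_polys_psi j i)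
  note pp = phase_polys.intros qt_phase_polys rt_phase_polys
  from \<open>i \<in> {1, 2, 3}\<close> consider "i = 1" | "i = 2" | "i = 3" by auto
  then show ?case
  proof cases
    case 1
    show ?thesis
      by (rule bexI[of _ "\<lambda>x. 2 * lam j * \<psi> 1 j x + (- sqrt 2 * rt x) * \<psi> 2 j x"])
         (use 1 phase_polys_psi.hyps ode_psi1 in simp, intro pp, use phase_polys_psi.hyps in auto)
  next
    case 2
    show ?thesis
      by (rule bexI[of _ "\<lambda>x. - sqrt 2 * qt x * \<psi> 1 j x + (- sqrt 2 * rt x) * \<psi> 3 j x"])
         (use 2 phase_polys_psi.hyps ode_psi2 in simp, intro pp, use phase_polys_psi.hyps in auto)
  next
    case 3
    show ?thesis
      by (rule bexI[of _ "\<lambda>x. - sqrt 2 * qt x * \<psi> 2 j x + (- 2 * lam j) * \<psi> 3 j x"])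
         (use 3 phase_polys_psi.hyps ode_psi3 in simp, intro pp, use phase_polys_psi.hyps in auto)
  qed
next
  case (phase_polys_add f g)
  then obtain f' g' where "f' \<in> phase_polys" "\<forall>x\<in>J. (f has_real_derivative f' x) (at x)"
    "g' \<in> phase_polys" "\<forall>x\<in>J. (g has_real_derivative g' x) (at x)" by blast
  then show ?case
    by (intro bexI[of _ "\<lambda>x. f' x + g' x"]) (auto intro: DERIV_add phase_polys.intros)
next
  case (phase_polys_mult f g)
  then obtain f' g' where "f' \<in> phase_polys" "\<forall>x\<in>J. (f has_real_derivative f' x) (at x)"
    "g' \<in> phase_polys" "\<forall>x\<in>J. (g has_real_derivative g' x) (at x)" by blast
  with phase_polys_mult.hyps show ?case
    by (intro bexI[of _ "\<lambda>x. f x * g' x + f' x * g x"]) (auto intro: DERIV_mult' phase_polys.intros)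
qed

lemma phase_polys_higher_deriv_has_derivative:
  assumes "f \<in> phase_polys"
  shows "\<exists>h\<in>phase_polys. \<forall>x\<in>J. ((deriv ^^ k) f has_real_derivative h x) (at x)"
proof (induction k)
  case 0
  then show ?case using phase_polys_has_derivative[OF assms] by simp
next
  case (Suc k)
  then obtain h where "h \<in> phase_polys" and h: "\<forall>x\<in>J. ((deriv ^^ k) f has_real_derivative h x) (at x)"
    by blast
  then obtain g where "g \<in> phase_polys" and g: "\<forall>x\<in>J. (h has_real_derivative g x) (at x)"
    using phase_polys_has_derivative by blast
  have "((deriv ^^ Suc k) f has_real_derivative g x) (at x)" if "x \<in> J" for x
  proof (rule has_field_derivative_transform_within_open[OF _ J that])
    show "(h has_real_derivative g x) (at x)" using g that by blast
    show "h y = (deriv ^^ Suc k) f y" if "y \<in> J" for y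
      using DERIV_imp_deriv[of "(deriv ^^ k) f" "h y" y] h that by simp
  qed
  with \<open>g \<in> phase_polys\<close> show ?case by blast
qed

lemma smooth_at_phase_polys: "f \<in> phase_polys \<Longrightarrow> x \<in> J \<Longrightarrow> smooth_at f x"
  unfolding smooth_at_def real_differentiable_def
  using phase_polys_higher_deriv_has_derivative by blast

lemma smooth_at_qt: "x \<in> J \<Longrightarrow> smooth_at qt x" and smooth_at_rt: "x \<in> J \<Longrightarrow> smooth_at rt x"
  by (simp_all add: smooth_at_phase_polys qt_phase_polys rt_phase_polys)

definition g_comp :: "nat \<Rightarrow> real \<Rightarrow> real" where
  "g_comp j x = \<phi> 1 j x * \<psi> 1 j x - \<phi> 3 j x * \<psi> 3 j x"
definition h_comp :: "nat \<Rightarrow> real \<Rightarrow> real" where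
  "h_comp j x = \<phi> 1 j x * \<psi> 2 j x + \<phi> 2 j x * \<psi> 3 j x"
definition k_comp :: "nat \<Rightarrow> real \<Rightarrow> real" where
  "k_comp j x = \<phi> 2 j x * \<psi> 1 j x + \<phi> 3 j x * \<psi> 2 j x"

definition G :: "nat \<Rightarrow> real \<Rightarrow> real" where "G k x = (\<Sum>j=1..N. lam j ^ k * mu j * g_comp j x)"
definition H :: "nat \<Rightarrow> real \<Rightarrow> real" where "H k x = (\<Sum>j=1..N. lam j ^ k * mu j * h_comp j x)"
definition K :: "nat \<Rightarrow> real \<Rightarrow> real" where "K k x = (\<Sum>j=1..N. lam j ^ k * mu j * k_comp j x)"

lemma G_eq_ip:
  "G k x = ip lam mu N (\<lambda>i j. \<phi> i j x) (\<lambda>i j. \<psi> i j x) k 1 1 - ip lam mu N (\<lambda>i j. \<phi> i j x) (\<lambda>i j. \<psi> i j x) k 3 3"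
  by (simp add: G_def g_comp_def ip_def sum_subtractf algebra_simps)

lemma H_eq_ip:
  "H k x = ip lam mu N (\<lambda>i j. \<phi> i j x) (\<lambda>i j. \<psi> i j x) k 1 2 + ip lam mu N (\<lambda>i j. \<phi> i j x) (\<lambda>i j. \<psi> i j x) k 2 3"
  by (simp add: H_def h_comp_def ip_def sum.distrib algebra_simps)

lemma K_eq_ip:
  "K k x = ip lam mu N (\<lambda>i j. \<phi> i j x) (\<lambda>i j. \<psi> i j x) k 2 1 + ip lam mu N (\<lambda>i j. \<phi> i j x) (\<lambda>i j. \<psi> i j x) k 3 2"
  by (simp add: K_def k_comp_def ip_def sum.distrib algebra_simps)

lemma qt_eq: "qt x = sqrt 2 * H 0 x" and rt_eq: "rt x = sqrt 2 * K 0 x"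
  by (simp_all add: qt rt H_eq_ip K_eq_ip)

lemma g_comp_has_derivative:
  assumes "j \<in> {1..N}" "x \<in> J"
  shows "(g_comp j has_real_derivative sqrt 2 * (qt x * k_comp j x - rt x * h_comp j x)) (at x)"
  using DERIV_diff[OF DERIV_mult'[OF ode_phi1[OF assms] ode_psi1[OF assms]]
                      DERIV_mult'[OF ode_phi3[OF assms] ode_psi3[OF assms]]]
  unfolding g_comp_def[abs_def] by (rule DERIV_cong) (simp add: k_comp_def h_comp_def algebra_simps)

lemma h_comp_has_derivative:
  assumes "j \<in> {1..N}" "x \<in> J"
  shows "(h_comp j has_real_derivative - sqrt 2 * qt x * g_comp j x - 2 * lam j * h_comp j x) (at x)"
  using DERIV_add[OF DERIV_mult'[OF ode_phi1[OF assms] ode_psi2[OF assms]]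
                     DERIV_mult'[OF ode_phi2[OF assms] ode_psi3[OF assms]]]
  unfolding h_comp_def[abs_def] by (rule DERIV_cong) (simp add: g_comp_def algebra_simps)

lemma k_comp_has_derivative:
  assumes "j \<in> {1..N}" "x \<in> J"
  shows "(k_comp j has_real_derivative sqrt 2 * rt x * g_comp j x + 2 * lam j * k_comp j x) (at x)"
  using DERIV_add[OF DERIV_mult'[OF ode_phi2[OF assms] ode_psi1[OF assms]]
                     DERIV_mult'[OF ode_phi3[OF assms] ode_psi2[OF assms]]]
  unfolding k_comp_def[abs_def] by (rule DERIV_cong) (simp add: g_comp_def algebra_simps)

lemma weighted_sum_has_derivative:
  "(\<And>j. j \<in> {1..N} \<Longrightarrow> (f j has_real_derivative f' j) (at x)) \<Longrightarrow>
    ((\<lambda>y. \<Sum>j=1..N. lam j ^ k * mu j * f j y) has_real_derivative (\<Sum>j=1..N. lam j ^ k * mu j * f' j)) (at x)"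
  by (intro DERIV_sum DERIV_cmult) auto

lemma G_has_derivative:
  assumes "x \<in> J"
  shows "((\<lambda>y. G k y) has_real_derivative sqrt 2 * (qt x * K k x - rt x * H k x)) (at x)"
proof -
  have "((\<lambda>y. G k y) has_real_derivative
      (\<Sum>j=1..N. lam j ^ k * mu j * (sqrt 2 * (qt x * k_comp j x - rt x * h_comp j x)))) (at x)"
    unfolding G_def using assms by (intro weighted_sum_has_derivative g_comp_has_derivative)
  moreover have "(\<Sum>j=1..N. lam j ^ k * mu j * (sqrt 2 * (qt x * k_comp j x - rt x * h_comp j x)))
      = sqrt 2 * (qt x * K k x - rt x * H k x)"
    by (simp add: K_def H_def sum_distrib_left sum_subtractf algebra_simps)
  ultimately show ?thesis by simp
qed

lemma H_has_derivative:
  assumes "x \<in> J"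
  shows "((\<lambda>y. H k y) has_real_derivative - sqrt 2 * qt x * G k x - 2 * H (Suc k) x) (at x)"
proof -
  have "((\<lambda>y. H k y) has_real_derivative
      (\<Sum>j=1..N. lam j ^ k * mu j * (- sqrt 2 * qt x * g_comp j x - 2 * lam j * h_comp j x))) (at x)"
    unfolding H_def using assms by (intro weighted_sum_has_derivative h_comp_has_derivative)
  moreover have "(\<Sum>j=1..N. lam j ^ k * mu j * (- sqrt 2 * qt x * g_comp j x - 2 * lam j * h_comp j x))
      = - sqrt 2 * qt x * G k x - 2 * H (Suc k) x"
    by (simp add: G_def H_def sum_distrib_left sum_subtractf algebra_simps)
  ultimately show ?thesis by simp
qed

lemma K_has_derivative:
  assumes "x \<in> J"
  shows "((\<lambda>y. K k y) has_real_derivative sqrt 2 * rt x * G k x + 2 * K (Suc k) x) (at x)"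
proof -
  have "((\<lambda>y. K k y) has_real_derivative
      (\<Sum>j=1..N. lam j ^ k * mu j * (sqrt 2 * rt x * g_comp j x + 2 * lam j * k_comp j x))) (at x)"
    unfolding K_def using assms by (intro weighted_sum_has_derivative k_comp_has_derivative)
  moreover have "(\<Sum>j=1..N. lam j ^ k * mu j * (sqrt 2 * rt x * g_comp j x + 2 * lam j * k_comp j x))
      = sqrt 2 * rt x * G k x + 2 * K (Suc k) x"
    by (simp add: G_def K_def sum_distrib_left sum.distrib algebra_simps)
  ultimately show ?thesis by simp
qed

definition Gser :: "real \<Rightarrow> real fps" where "Gser x = Abs_fps (\<lambda>k. G k x)"
definition Hser :: "real \<Rightarrow> real fps" where "Hser x = Abs_fps (\<lambda>k. H k x)"
definition Kser :: "real \<Rightarrow> real fps" where "Kser x = Abs_fps (\<lambda>k. K k x)"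

definition Fser :: "real \<Rightarrow> real fps" where
  "Fser x = 4 * (fps_X ^ 2 * (Gser x * Gser x + 2 * (Hser x * Kser x))) - 8 * (fps_X * Gser x)"

definition Iser :: "real \<Rightarrow> real fps" where "Iser x = d_fps oo Fser x"

lemma Fser_nth_0: "Fser x $ 0 = 0"
  by (simp add: Fser_def fps_numeral_mult_nth fps_X_power_mult_nth)

lemma Fm_eq_Fser_nth:
  assumes "1 \<le> m"
  shows "Fm lam mu N (\<lambda>i j. \<phi> i j x) (\<lambda>i j. \<psi> i j x) m = Fser x $ m"
proof (cases "m = 1")
  case True
  then show ?thesis
    by (simp add: Fm_def Let_def Fser_def Gser_def G_eq_ip fps_numeral_mult_nth fps_X_power_mult_nth)
next
  case False
  then obtain n where n: "m = Suc (Suc n)" using assms by (cases m; cases "m - 1") auto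
  have "(\<Sum>i=1..m-1. G (i-1) x * G (m-i-1) x + 2 * H (i-1) x * K (m-i-1) x)
      = (\<Sum>i=0..n. G i x * G (n - i) x + 2 * H i x * K (n - i) x)"
    unfolding n
    using sum.shift_bounds_cl_Suc_ivl[of "\<lambda>i. G (i-1) x * G (Suc (Suc n) - i - 1) x
      + 2 * H (i-1) x * K (Suc (Suc n) - i - 1) x" 0 n]
    by simp
  also have "\<dots> = (Gser x * Gser x + 2 * (Hser x * Kser x)) $ n"
    unfolding fps_add_nth fps_numeral_mult_nth
    by (simp add: fps_mult_nth Gser_def Hser_def Kser_def sum.distrib sum_distrib_left mult.assoc)
  finally show ?thesis
    using False n by (simp add: Fm_def Let_def Fser_def Gser_def G_eq_ip H_eq_ip K_eq_ip
        fps_numeral_mult_nth fps_X_power_mult_nth)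
qed

lemma Im_eq_Iser_nth: "Im lam mu N (\<lambda>i j. \<phi> i j x) (\<lambda>i j. \<psi> i j x) m = Iser x $ m"
proof -
  have "(Fser x ^ n) $ m = (\<Sum>is\<in>compositions n m. prod_list (map (Fm lam mu N (\<lambda>i j. \<phi> i j x) (\<lambda>i j. \<psi> i j x)) is))"
    for n
  proof -
    have "prod_list (map (\<lambda>k. Fser x $ k) is) = prod_list (map (Fm lam mu N (\<lambda>i j. \<phi> i j x) (\<lambda>i j. \<psi> i j x)) is)"
      if "is \<in> compositions n m" for "is"
      using that Fm_eq_Fser_nth by (auto simp: compositions_def intro!: arg_cong[where f = prod_list])
    then show ?thesis
      by (simp add: fps_power_nth_compositions[OF Fser_nth_0])
  qed
  then show ?thesis
    by (simp add: Im_def Iser_def d_fps_compose_nth Fser_nth_0 compositions_def)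
qed

definition Gser_deriv :: "real \<Rightarrow> real fps" where
  "Gser_deriv x = 2 * (fps_const (H 0 x) * Kser x - fps_const (K 0 x) * Hser x)"
definition Hser_deriv :: "real \<Rightarrow> real fps" where
  "Hser_deriv x = Abs_fps (\<lambda>k. - 2 * H 0 x * G k x - 2 * H (Suc k) x)"
definition Kser_deriv :: "real \<Rightarrow> real fps" where
  "Kser_deriv x = Abs_fps (\<lambda>k. 2 * K 0 x * G k x + 2 * K (Suc k) x)"

lemma sqrt2_qt: "sqrt 2 * qt x = 2 * H 0 x" and sqrt2_rt: "sqrt 2 * rt x = 2 * K 0 x"
  by (simp_all add: qt_eq rt_eq mult.assoc[symmetric])

lemma fps_has_derivative_Gser:
  assumes "x \<in> J"
  shows "fps_has_derivative Gser (Gser_deriv x) x"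
  unfolding fps_has_derivative_def
proof
  fix k
  have "((\<lambda>y. G k y) has_real_derivative (sqrt 2 * qt x) * K k x - (sqrt 2 * rt x) * H k x) (at x)"
    using G_has_derivative[OF assms] by (simp only: right_diff_distrib mult.assoc[symmetric])
  then have "((\<lambda>y. G k y) has_real_derivative 2 * H 0 x * K k x - 2 * K 0 x * H k x) (at x)"
    by (simp only: sqrt2_qt sqrt2_rt)
  then show "((\<lambda>z. Gser z $ k) has_real_derivative Gser_deriv x $ k) (at x)"
    by (simp add: Gser_def Gser_deriv_def Hser_def Kser_def fps_numeral_mult_nth algebra_simps)
qed

lemma fps_has_derivative_Hser: "x \<in> J \<Longrightarrow> fps_has_derivative Hser (Hser_deriv x) x"
  unfolding fps_has_derivative_def using H_has_derivative
  by (simp add: Hser_def Hser_deriv_def flip: sqrt2_qt)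

lemma fps_has_derivative_Kser: "x \<in> J \<Longrightarrow> fps_has_derivative Kser (Kser_deriv x) x"
  unfolding fps_has_derivative_def using K_has_derivative
  by (simp add: Kser_def Kser_deriv_def flip: sqrt2_rt)

lemma X_mult_Hser_deriv:
  "fps_X * Hser_deriv x = - (2 * (fps_const (H 0 x) * (fps_X * Gser x))) - 2 * (Hser x - fps_const (H 0 x))"
  by (rule fps_ext) (simp add: Hser_deriv_def Hser_def Gser_def fps_numeral_mult_nth fps_numeral_nth split: nat.split)

lemma X_mult_Kser_deriv:
  "fps_X * Kser_deriv x = 2 * (fps_const (K 0 x) * (fps_X * Gser x)) + 2 * (Kser x - fps_const (K 0 x))"
  by (rule fps_ext) (simp add: Kser_deriv_def Kser_def Gser_def fps_numeral_mult_nth fps_numeral_nth split: nat.split)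

lemma fps_has_derivative_Fser:
  assumes "x \<in> J"
  shows "fps_has_derivative Fser 0 x"
proof -
  define X g h k g' h' k' c d
    where "X = (fps_X :: real fps)" and "g = Gser x" and "h = Hser x" and "k = Kser x"
      and "g' = Gser_deriv x" and "h' = Hser_deriv x" and "k' = Kser_deriv x"
      and "c = fps_const (H 0 x)" and "d = fps_const (K 0 x)"
  have "fps_has_derivative Fser (4 * (X ^ 2 * (g' * g + g * g' + 2 * (h' * k + h * k'))) - 8 * (X * g')) x"
    unfolding Fser_def[abs_def] X_def g_def h_def k_def g'_def h'_def k'_def
    by (intro fps_has_derivative_diff fps_has_derivative_const_mult fps_has_derivative_add
        fps_has_derivative_mult fps_has_derivative_Gser fps_has_derivative_Hser
        fps_has_derivative_Kser assms)
  moreover have "g' = 2 * (c * k - d * h)"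
    by (simp add: g'_def Gser_deriv_def c_def d_def k_def h_def)
  moreover have "X * h' = - (2 * (c * (X * g))) - 2 * (h - c)" "X * k' = 2 * (d * (X * g)) + 2 * (k - d)"
    unfolding X_def h'_def k'_def c_def d_def g_def h_def k_def
    by (rule X_mult_Hser_deriv X_mult_Kser_deriv)+
  then have "4 * (X ^ 2 * (g' * g + g * g' + 2 * (h' * k + h * k'))) - 8 * (X * g') = 0"
    using \<open>g' = 2 * (c * k - d * h)\<close> by algebra
  ultimately show ?thesis by simp
qed

lemma fps_has_derivative_Iser:
  assumes "x \<in> J"
  shows "fps_has_derivative Iser 0 x"
  unfolding fps_has_derivative_def
proof
  fix m
  have "((\<lambda>z. (Fser z ^ n) $ m) has_real_derivative 0) (at x)" for n
    using fps_has_derivative_power_0[OF fps_has_derivative_Fser[OF assms], of n]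
    by (simp add: fps_has_derivative_def)
  then have "((\<lambda>z. \<Sum>n=1..m. dn n * (Fser z ^ n) $ m) has_real_derivative (\<Sum>n=1..m. dn n * 0)) (at x)"
    by (intro DERIV_sum DERIV_cmult)
  then show "((\<lambda>z. Iser z $ m) has_real_derivative 0 $ m) (at x)"
    by (cases "m = 0") (simp_all add: Iser_def d_fps_compose_nth Fser_nth_0)
qed

definition Aser :: "real \<Rightarrow> real fps" where "Aser x = - Iser x + fps_X * (Iser x * Gser x)"
definition Bser :: "real \<Rightarrow> real fps" where "Bser x = fps_const (sqrt 2) * (fps_X * (Iser x * Hser x))"
definition Cser :: "real \<Rightarrow> real fps" where "Cser x = fps_const (sqrt 2) * (fps_X * (Iser x * Kser x))"

definition Bser_deriv :: "real \<Rightarrow> real fps" where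
  "Bser_deriv x = fps_const (sqrt 2) * (fps_X * (Iser x * Hser_deriv x))"
definition Cser_deriv :: "real \<Rightarrow> real fps" where
  "Cser_deriv x = fps_const (sqrt 2) * (fps_X * (Iser x * Kser_deriv x))"

lemma fps_has_derivative_Bser:
  assumes "x \<in> J"
  shows "fps_has_derivative Bser (Bser_deriv x) x"
proof -
  have "fps_has_derivative (\<lambda>z. fps_const (sqrt 2) * (fps_X * (Iser z * Hser z)))
      (fps_const (sqrt 2) * (fps_X * (0 * Hser x + Iser x * Hser_deriv x))) x"
    by (intro fps_has_derivative_const_mult fps_has_derivative_mult fps_has_derivative_Iser
        fps_has_derivative_Hser assms)
  then show ?thesis by (simp add: Bser_def[abs_def] Bser_deriv_def)
qed

lemma fps_has_derivative_Cser:
  assumes "x \<in> J"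
  shows "fps_has_derivative Cser (Cser_deriv x) x"
proof -
  have "fps_has_derivative (\<lambda>z. fps_const (sqrt 2) * (fps_X * (Iser z * Kser z)))
      (fps_const (sqrt 2) * (fps_X * (0 * Kser x + Iser x * Kser_deriv x))) x"
    by (intro fps_has_derivative_const_mult fps_has_derivative_mult fps_has_derivative_Iser
        fps_has_derivative_Kser assms)
  then show ?thesis by (simp add: Cser_def[abs_def] Cser_deriv_def)
qed

lemma fps_const_qt: "fps_const (qt x) = fps_const (sqrt 2) * fps_const (H 0 x)"
  and fps_const_rt: "fps_const (rt x) = fps_const (sqrt 2) * fps_const (K 0 x)"
  by (simp_all add: qt_eq rt_eq)

lemma Bser_recursion: "Bser x = fps_X * (fps_const (-1/2) * Bser_deriv x - fps_const (qt x) * Aser x)"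
proof -
  have "fps_const (-1/2) * 2 = (-1 :: real fps)"
    by (simp add: fps_numeral_fps_const)
  with X_mult_Hser_deriv[of x] show ?thesis
    unfolding Bser_def Bser_deriv_def Aser_def fps_const_qt by algebra
qed

lemma Cser_recursion: "Cser x = fps_X * (fps_const (1/2) * Cser_deriv x - fps_const (rt x) * Aser x)"
proof -
  have "fps_const (1/2) * 2 = (1 :: real fps)"
    by (simp add: fps_numeral_fps_const)
  with X_mult_Kser_deriv[of x] show ?thesis
    unfolding Cser_def Cser_deriv_def Aser_def fps_const_rt by algebra
qed

lemma Aser_square: "Aser x ^ 2 + Bser x * Cser x = 1"
proof -
  have "Iser x ^ 2 * (1 + fps_const (1/4) * Fser x) = 1"
    unfolding Iser_def by (rule d_fps_compose_square[OF Fser_nth_0])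
  moreover have "fps_const (1/4) * 4 = (1 :: real fps)"
    by (simp add: fps_numeral_fps_const)
  moreover have "fps_const (sqrt 2) * fps_const (sqrt 2) = (2 :: real fps)"
    by (simp add: fps_numeral_fps_const)
  ultimately show ?thesis
    unfolding Aser_def Bser_def Cser_def Fser_def by algebra
qed

lemma Aser_nth_0: "Aser x $ 0 = -1" and Bser_nth_0: "Bser x $ 0 = 0" and Cser_nth_0: "Cser x $ 0 = 0"
  by (simp_all add: Aser_def Bser_def Cser_def Iser_def d_fps_compose_nth Fser_nth_0 d_fps_def)

lemma Aser_nth_Suc: "Aser x $ Suc m = (\<Sum>i=0..m. Iser x $ i * G (m - i) x) - Iser x $ Suc m"
  unfolding Aser_def fps_add_nth fps_neg_nth fps_X_mult_nth by (simp add: fps_mult_nth Gser_def)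

lemma Bser_nth_Suc: "Bser x $ Suc m = sqrt 2 * (\<Sum>i=0..m. Iser x $ i * H (m - i) x)"
  unfolding Bser_def fps_mult_left_const_nth fps_X_mult_nth by (simp add: fps_mult_nth Hser_def)

lemma Cser_nth_Suc: "Cser x $ Suc m = sqrt 2 * (\<Sum>i=0..m. Iser x $ i * K (m - i) x)"
  unfolding Cser_def fps_mult_left_const_nth fps_X_mult_nth by (simp add: fps_mult_nth Kser_def)

lemma along_Dx_eq_derivative:
  assumes "diffpoly Z" "y \<in> J" "\<And>z. z \<in> J \<Longrightarrow> along Z qt rt z = f z"
    and "(f has_real_derivative D) (at y)"
  shows "along (Dx Z) qt rt y = D"
proof (rule DERIV_unique)
  show "(along Z qt rt has_real_derivative along (Dx Z) qt rt y) (at y)"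
    using assms(1,2) by (intro has_real_derivative_along_Dx smooth_at_qt smooth_at_rt)
  show "(along Z qt rt has_real_derivative D) (at y)"
    by (rule has_field_derivative_transform_within_open[OF assms(4) J assms(2)]) (simp add: assms(3))
qed

lemma along_b_dp_Suc_eq_Bser:
  assumes y: "y \<in> J" and "along (a_dp k) qt rt y = Aser y $ k"
    and "\<And>z. z \<in> J \<Longrightarrow> along (b_dp k) qt rt z = Bser z $ k"
  shows "along (b_dp (Suc k)) qt rt y = Bser y $ Suc k"
proof -
  have "along (Dx (b_dp k)) qt rt y = Bser_deriv y $ k"
    using fps_has_derivative_Bser[OF y] assms(3)
    by (intro along_Dx_eq_derivative[OF diffpoly_b_dp y]) (auto simp: fps_has_derivative_def)
  moreover have "Bser y $ Suc k = -(1/2) * Bser_deriv y $ k - qt y * Aser y $ k"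
    by (subst Bser_recursion) simp
  ultimately show ?thesis using assms(2) by (simp add: along_b_dp_Suc)
qed

lemma along_c_dp_Suc_eq_Cser:
  assumes y: "y \<in> J" and "along (a_dp k) qt rt y = Aser y $ k"
    and "\<And>z. z \<in> J \<Longrightarrow> along (c_dp k) qt rt z = Cser z $ k"
  shows "along (c_dp (Suc k)) qt rt y = Cser y $ Suc k"
proof -
  have "along (Dx (c_dp k)) qt rt y = Cser_deriv y $ k"
    using fps_has_derivative_Cser[OF y] assms(3)
    by (intro along_Dx_eq_derivative[OF diffpoly_c_dp y]) (auto simp: fps_has_derivative_def)
  moreover have "Cser y $ Suc k = (1/2) * Cser_deriv y $ k - rt y * Aser y $ k"
    by (subst Cser_recursion) simp
  ultimately show ?thesis using assms(2) by (simp add: along_c_dp_Suc)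
qed

lemma along_abc_eq_series:
  "\<forall>y\<in>J. along (a_dp m) qt rt y = Aser y $ m \<and> along (b_dp m) qt rt y = Bser y $ m
     \<and> along (c_dp m) qt rt y = Cser y $ m"
proof (induction m rule: less_induct)
  case (less m)
  show ?case
  proof (cases m)
    case 0
    then show ?thesis by (simp add: abc_0 along_def Aser_nth_0 Bser_nth_0 Cser_nth_0)
  next
    case (Suc k)
    have a: "along (a_dp j) qt rt z = Aser z $ j"
      and b: "along (b_dp j) qt rt z = Bser z $ j"
      and c: "along (c_dp j) qt rt z = Cser z $ j" if "j \<le> k" "z \<in> J" for j z
      using less[of j] that Suc by auto
    show ?thesis
    proof (intro ballI conjI)
      fix y assume y: "y \<in> J"
      have "along (a_dp (Suc k)) qt rt y
          = 1/2 * (\<Sum>i=1..k. Aser y $ i * Aser y $ (Suc k - i) + Bser y $ i * Cser y $ (Suc k - i))"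
        unfolding along_a_dp_Suc using y by (intro arg_cong[where f = "\<lambda>s. 1/2 * s"] sum.cong) (auto simp: a b c)
      also have "\<dots> = Aser y $ Suc k"
        using fps_quadratic_recursion[OF Aser_nth_0 Bser_nth_0 Cser_nth_0 Aser_square] by simp
      finally show "along (a_dp m) qt rt y = Aser y $ m" using Suc by simp
      show "along (b_dp m) qt rt y = Bser y $ m"
        unfolding Suc using y a[OF order.refl y] b[OF order.refl] by (rule along_b_dp_Suc_eq_Bser)
      show "along (c_dp m) qt rt y = Cser y $ m"
        unfolding Suc using y a[OF order.refl y] c[OF order.refl] by (rule along_c_dp_Suc_eq_Cser)
    qed
  qed
qed

lemma along_abc_Suc:
  assumes "x \<in> J"
  shows "along (a_dp (Suc m)) qt rt x = (\<Sum>i=0..m. Iser x $ i * G (m - i) x) - Iser x $ Suc m"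
    and "along (b_dp (Suc m)) qt rt x = sqrt 2 * (\<Sum>i=0..m. Iser x $ i * H (m - i) x)"
    and "along (c_dp (Suc m)) qt rt x = sqrt 2 * (\<Sum>i=0..m. Iser x $ i * K (m - i) x)"
  using along_abc_eq_series[of "Suc m"] assms by (simp_all add: Aser_nth_Suc Bser_nth_Suc Cser_nth_Suc)

end

theorem theorem4p1:
  fixes N :: nat and lam mu :: "nat \<Rightarrow> real"
    and \<phi> \<psi> :: "nat \<Rightarrow> nat \<Rightarrow> real \<Rightarrow> real"
    and J :: "real set"
    and qt rt :: "real \<Rightarrow> real"
  assumes N: "N \<ge> 1"
    and distinct: "\<And>j k. j \<in> {1..N} \<Longrightarrow> k \<in> {1..N} \<Longrightarrow> j \<noteq> k \<Longrightarrow> lam j \<noteq> lam k"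
    and nonzero: "\<And>j. j \<in> {1..N} \<Longrightarrow> mu j \<noteq> 0"
    and J: "open J"
    and qt: "\<And>x. qt x = sqrt 2 * (ip lam mu N (\<lambda>i j. \<phi> i j x) (\<lambda>i j. \<psi> i j x) 0 1 2
                                  + ip lam mu N (\<lambda>i j. \<phi> i j x) (\<lambda>i j. \<psi> i j x) 0 2 3)"
    and rt: "\<And>x. rt x = sqrt 2 * (ip lam mu N (\<lambda>i j. \<phi> i j x) (\<lambda>i j. \<psi> i j x) 0 2 1
                                  + ip lam mu N (\<lambda>i j. \<phi> i j x) (\<lambda>i j. \<psi> i j x) 0 3 2)"
    and ode_phi1: "\<And>j x. j \<in> {1..N} \<Longrightarrow> x \<in> J \<Longrightarrow>
       (\<phi> 1 j has_real_derivative (-2 * lam j * \<phi> 1 j x + sqrt 2 * qt x * \<phi> 2 j x)) (at x)"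
    and ode_phi2: "\<And>j x. j \<in> {1..N} \<Longrightarrow> x \<in> J \<Longrightarrow>
       (\<phi> 2 j has_real_derivative (sqrt 2 * rt x * \<phi> 1 j x + sqrt 2 * qt x * \<phi> 3 j x)) (at x)"
    and ode_phi3: "\<And>j x. j \<in> {1..N} \<Longrightarrow> x \<in> J \<Longrightarrow>
       (\<phi> 3 j has_real_derivative (sqrt 2 * rt x * \<phi> 2 j x + 2 * lam j * \<phi> 3 j x)) (at x)"
    and ode_psi1: "\<And>j x. j \<in> {1..N} \<Longrightarrow> x \<in> J \<Longrightarrow>
       (\<psi> 1 j has_real_derivative (2 * lam j * \<psi> 1 j x - sqrt 2 * rt x * \<psi> 2 j x)) (at x)"
    and ode_psi2: "\<And>j x. j \<in> {1..N} \<Longrightarrow> x \<in> J \<Longrightarrow>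
       (\<psi> 2 j has_real_derivative (- sqrt 2 * qt x * \<psi> 1 j x - sqrt 2 * rt x * \<psi> 3 j x)) (at x)"
    and ode_psi3: "\<And>j x. j \<in> {1..N} \<Longrightarrow> x \<in> J \<Longrightarrow>
       (\<psi> 3 j has_real_derivative (- sqrt 2 * qt x * \<psi> 2 j x - 2 * lam j * \<psi> 3 j x)) (at x)"
  shows "\<forall>m x. x \<in> J \<longrightarrow>
    (let P = (\<lambda>i j. \<phi> i j x); Q = (\<lambda>i j. \<psi> i j x);
         I = Im lam mu N P Q; g = ip lam mu N P Q in
      along (a_dp (Suc m)) qt rt x
        = (\<Sum>i=0..m. I i * (g (m-i) 1 1 - g (m-i) 3 3)) - I (Suc m)
    \<and> along (b_dp (Suc m)) qt rt x
        = sqrt 2 * (\<Sum>i=0..m. I i * (g (m-i) 1 2 + g (m-i) 2 3))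
    \<and> along (c_dp (Suc m)) qt rt x
        = sqrt 2 * (\<Sum>i=0..m. I i * (g (m-i) 2 1 + g (m-i) 3 2)))"
proof -
  interpret spatial_solution N lam mu \<phi> \<psi> J qt rt
    using J qt rt ode_phi1 ode_phi2 ode_phi3 ode_psi1 ode_psi2 ode_psi3 by (rule spatial_solution.intro)
  show ?thesis
    by (simp add: Let_def along_abc_Suc Im_eq_Iser_nth G_eq_ip H_eq_ip K_eq_ip)
qed

end
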